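(* Let $a,a^\dagger$ be the annihilation and creation operators of the harmonic oscillator, $[a,a^\dagger]=1$, with vacuum $|0\rangle$ ($a|0\rangle=0$, $\langle0|a^\dagger=0$, $\langle0|0\rangle=1$). For positive integers $n$ let $A_n^\dagger$ act on the formal span of $\{(a^\dagger)^m|0\rangle\}_{m\ge0}$ by $A_n^\dagger(a^\dagger)^m|0\rangle=\frac{m!}{(mn)!}(a^\dagger)^{mn}|0\rangle$, and let $A_n$ act from the right on the formal span of $\{\langle0|a^m\}_{m\ge0}$ by $\langle0|a^mA_n=\langle0|a^{mn}$. For a prime $p$ and $\mathrm{Re}(s)>1$ let $$\zeta_p(s):=\frac{1}{p!}\langle0|\,a^p\,\frac{1}{1-(a^\dagger a)^{-s}}\,(a^\dagger)^p\,|0\rangle .$$ Then $$\zeta_p(s)=\langle0|\,a\Big(\frac{1}{1-A_p}\Big)(a^\dagger a)^{-s}\Big(\frac{1}{1-A_p^\dagger}\Big)a^\dagger\,|0\rangle .$$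
   Context: The number states $|n\rangle=(a^\dagger)^n|0\rangle/\sqrt{n!}$ are orthonormal; for a function $f$, $f(a^\dagger a)|n\rangle=f(n)|n\rangle$ for $n\ge1$, so $(a^\dagger a)^{-s}|n\rangle=n^{-s}|n\rangle$ and $\frac{1}{1-(a^\dagger a)^{-s}}|n\rangle=\frac{1}{1-n^{-s}}|n\rangle$ ($n\ge2$). Here $\frac{1}{1-A_p^\dagger}:=\sum_{k\ge0}(A_p^\dagger)^k$ and $\frac{1}{1-A_p}:=\sum_{k\ge0}A_p^k$, applied formally and paired termwise. *)

theory Defs
  imports "HOL-Analysis.Analysis" "HOL-Computational_Algebra.Primes"
begin

text \<open>A ket in the formal span of the states
  (a^dagger)^m |0> is its coefficient function c :: nat => complex
  (c m = coefficient of (a^dagger)^m |0>); a bra in the formal span of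
  <0| a^m is likewise its coefficient function b.\<close>

type_synonym ket = "nat \<Rightarrow> complex"
type_synonym bra = "nat \<Rightarrow> complex"

definition ket_pow :: "nat \<Rightarrow> ket" where
  "ket_pow m = (\<lambda>k. if k = m then 1 else 0)"

definition bra_pow :: "nat \<Rightarrow> bra" where
  "bra_pow m = (\<lambda>k. if k = m then 1 else 0)"

text \<open>Pairing, from <0| a^m (a^dagger)^n |0> = m! (if m = n else 0),
  which follows from [a, a^dagger] = 1, a|0> = 0, <0|a^dagger = 0, <0|0> = 1.\<close>
definition pairing :: "bra \<Rightarrow> ket \<Rightarrow> complex" where
  "pairing b c = (\<Sum>\<^sub>\<infinity> m. b m * c m * of_nat (fact m))"

text \<open>f(a^dagger a) acting on kets: (a^dagger)^m|0> is an eigenvector of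
  a^dagger a with eigenvalue m.\<close>
definition num_fun :: "(nat \<Rightarrow> complex) \<Rightarrow> ket \<Rightarrow> ket" where
  "num_fun f c = (\<lambda>m. f m * c m)"

definition A_dag :: "nat \<Rightarrow> ket \<Rightarrow> ket" where
  "A_dag n c = (\<lambda>k. \<Sum>\<^sub>\<infinity> m\<in>{m. m * n = k}.
      c m * of_nat (fact m) / of_nat (fact (m * n)))"

definition A_bra :: "nat \<Rightarrow> bra \<Rightarrow> bra" where
  "A_bra n b = (\<lambda>k. \<Sum>\<^sub>\<infinity> m\<in>{m. m * n = k}. b m)"

text \<open>(a^dagger a)^(-s) eigenvalue function (only used on m \<ge> 1).\<close>
definition num_pow :: "complex \<Rightarrow> nat \<Rightarrow> complex" where
  "num_pow s m = of_nat m powr (- s)"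

definition zeta_p :: "nat \<Rightarrow> complex \<Rightarrow> complex" where
  "zeta_p p s = 1 / of_nat (fact p) *
     pairing (bra_pow p) (num_fun (\<lambda>m. 1 / (1 - num_pow s m)) (ket_pow p))"

end

theory Submission
  imports Defs
begin

text \<open>Iterating \<open>A\<^sub>p\<^sup>\<dagger>\<close> on \<open>a\<^sup>\<dagger>|0\<rangle>\<close> gives \<open>(a\<^sup>\<dagger>)\<^bsup>p^k\<^esup>|0\<rangle> / (p^k)!\<close>, and
  iterating \<open>A\<^sub>p\<close> on \<open>\<langle>0|a\<close> gives \<open>\<langle>0|a\<^bsup>p^j\<^esup>\<close>. By orthogonality of the number states
  only the diagonal \<open>j = k\<close> survives, where the factorials cancel and
  \<open>(a\<^sup>\<dagger>a)\<^sup>-\<^sup>s\<close> contributes \<open>(p^k)\<^sup>-\<^sup>s = (p\<^sup>-\<^sup>s)^k\<close>. The resulting geometric series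
  sums to \<open>1 / (1 - p\<^sup>-\<^sup>s)\<close>, which is \<open>\<zeta>\<^sub>p(s)\<close> because \<open>(a\<^sup>\<dagger>)\<^sup>p|0\<rangle>\<close> is an eigenvector
  of \<open>a\<^sup>\<dagger>a\<close> with eigenvalue \<open>p\<close>.\<close>

lemma infsum_if_eq:
  fixes x :: "'b::{comm_monoid_add, t2_space}"
  shows "infsum (\<lambda>m. if m = a then x else 0) A = (if a \<in> A then x else 0)"
proof -
  have "((\<lambda>m. if m = a then x else 0) has_sum (if a \<in> A then x else 0)) (A \<inter> {a})"
    by (cases "a \<in> A") (auto intro!: has_sum_finiteI)
  then have "((\<lambda>m. if m = a then x else 0) has_sum (if a \<in> A then x else 0)) A"
    by (subst has_sum_cong_neutral[where T = "A \<inter> {a}"]) auto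
  then show ?thesis
    by (rule infsumI)
qed

lemma has_sum_diagonal_iff:
  fixes f :: "'a \<Rightarrow> 'b::{comm_monoid_add, topological_space}"
  shows "((\<lambda>(j, k). if j = k then f k else 0) has_sum S) UNIV \<longleftrightarrow> (f has_sum S) UNIV"
proof -
  let ?g = "\<lambda>(j, k). if j = k then f k else 0"
  have "(?g has_sum S) UNIV \<longleftrightarrow> (?g has_sum S) (range (\<lambda>k. (k, k)))"
    by (rule has_sum_cong_neutral) auto
  also have "\<dots> \<longleftrightarrow> ((?g \<circ> (\<lambda>k. (k, k))) has_sum S) UNIV"
    by (rule has_sum_reindex) (auto intro: injI)
  finally show ?thesis
    by (simp add: o_def)
qed

definition ket_scaled :: "nat \<Rightarrow> complex \<Rightarrow> ket" where
  "ket_scaled m c = (\<lambda>k. if k = m then c else 0)"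

lemma ket_pow_eq_ket_scaled: "ket_pow m = ket_scaled m 1"
  by (simp add: ket_pow_def ket_scaled_def)

lemma A_bra_bra_pow: "A_bra n (bra_pow m) = bra_pow (m * n)"
proof
  fix k
  have "A_bra n (bra_pow m) k = infsum (\<lambda>m'. if m' = m then 1 else 0) {m'. m' * n = k}"
    unfolding A_bra_def bra_pow_def by (simp add: eq_commute)
  then show "A_bra n (bra_pow m) k = bra_pow (m * n) k"
    by (simp add: infsum_if_eq bra_pow_def eq_commute)
qed

lemma A_bra_funpow_bra_pow: "(A_bra n ^^ j) (bra_pow 1) = bra_pow (n ^ j)"
  by (induction j) (simp_all add: A_bra_bra_pow mult.commute)

lemma A_dag_ket_scaled:
  "A_dag n (ket_scaled m c) = ket_scaled (m * n) (c * fact m / fact (m * n))"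
proof
  fix k
  have "A_dag n (ket_scaled m c) k =
      infsum (\<lambda>m'. if m' = m then c * fact m / fact (m * n) else 0) {m'. m' * n = k}"
    unfolding A_dag_def ket_scaled_def by (intro infsum_cong) auto
  then show "A_dag n (ket_scaled m c) k = ket_scaled (m * n) (c * fact m / fact (m * n)) k"
    by (simp add: infsum_if_eq ket_scaled_def eq_commute)
qed

lemma A_dag_funpow_ket_pow:
  "(A_dag n ^^ k) (ket_pow 1) = ket_scaled (n ^ k) (1 / fact (n ^ k))"
proof (induction k)
  case 0
  then show ?case
    by (simp add: ket_pow_eq_ket_scaled)
next
  case (Suc k)
  have "fact (n ^ k) \<noteq> (0::complex)"
    by simp
  with Suc show ?case
    by (simp add: A_dag_ket_scaled mult.commute)
qed

lemma pairing_bra_pow_num_fun_ket_scaled: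
  "pairing (bra_pow m) (num_fun f (ket_scaled m' c)) =
     (if m = m' then f m * c * fact m else 0)"
proof -
  have "pairing (bra_pow m) (num_fun f (ket_scaled m' c)) =
      infsum (\<lambda>i. if i = m then (if m = m' then f m * c * fact m else 0) else 0) UNIV"
    unfolding pairing_def bra_pow_def num_fun_def ket_scaled_def by (intro infsum_cong) auto
  then show ?thesis
    by (simp add: infsum_if_eq)
qed

lemma num_pow_mult: "num_pow s (m * n) = num_pow s m * num_pow s n"
  unfolding num_pow_def of_nat_mult by (rule powr_times_real) auto

lemma num_pow_power: "num_pow s (m ^ k) = num_pow s m ^ k"
  by (induction k) (simp_all add: num_pow_mult, simp add: num_pow_def)

lemma norm_num_pow_less_1:
  assumes "2 \<le> n" and "0 < Re s"
  shows "norm (num_pow s n) < 1"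
proof -
  have "norm (num_pow s n) = real n powr (- Re s)"
    unfolding num_pow_def using assms(1) by (simp add: norm_powr_real_powr)
  also have "\<dots> < real n powr 0"
    using assms by (intro powr_less_mono) auto
  finally show ?thesis
    using assms(1) by simp
qed

lemma zeta_p_eq: "zeta_p p s = 1 / (1 - num_pow s p)"
  by (simp add: zeta_p_def ket_pow_eq_ket_scaled pairing_bra_pow_num_fun_ket_scaled)

theorem mainTheorem7:
  fixes p :: nat and s :: complex
  assumes "prime p" and "Re s > 1"
  shows "((\<lambda>(j, k). pairing ((A_bra p ^^ j) (bra_pow 1))
            (num_fun (num_pow s) ((A_dag p ^^ k) (ket_pow 1))))
          has_sum zeta_p p s) UNIV"
proof -
  have "2 \<le> p"
    using assms(1) prime_ge_2_nat by blast
  define w where "w = num_pow s p"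
  have "norm w < 1"
    unfolding w_def using \<open>2 \<le> p\<close> assms(2) by (intro norm_num_pow_less_1) auto
  then have "((\<lambda>k. w ^ k) has_sum 1 / (1 - w)) UNIV"
    by (intro norm_summable_imp_has_sum)
      (simp_all add: geometric_sums summable_geometric norm_power)
  moreover have "pairing ((A_bra p ^^ j) (bra_pow 1)) (num_fun (num_pow s) ((A_dag p ^^ k) (ket_pow 1)))
      = (if j = k then w ^ k else 0)" for j k
    unfolding A_bra_funpow_bra_pow A_dag_funpow_ket_pow pairing_bra_pow_num_fun_ket_scaled
    using \<open>2 \<le> p\<close> by (simp add: power_inject_exp num_pow_power w_def)
  ultimately show ?thesis
    by (simp add: has_sum_diagonal_iff zeta_p_eq flip: w_def)
qed

end
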